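(* There exist compact metric dynamical systems $(Y,g)$ and $(X,f)$, both transitive, and a factor map $\pi\colon (Y,g)\to (X,f)$ such that $(X,f)$ is Li-Yorke chaotic while $(Y,g)$ is not Li-Yorke chaotic. In other words, Li-Yorke chaos is not preserved under extensions.
   Context: A (topological) dynamical system $(X,f)$ consists of a compact metric space $(X,d)$ and a continuous map $f\colon X\to X$. A factor map from $(Y,g)$ to $(X,f)$ is a continuous surjection $\pi\colon Y\to X$ with $\pi\circ g=f\circ\pi$; then $(Y,g)$ is called an extension of $(X,f)$. The system $(X,f)$ is transitive if for any two non-empty open sets $U,V\subseteq X$ there is an integer $n>0$ with $U\cap f^{-n}V\neq\emptyset$. A subset $S\subseteq X$ with at least two points is a scrambled set if for all $x,y\in S$ with $x\neq y$ one has $\liminf_{n\to\infty} d(f^n(x),f^n(y))=0$ and $\limsup_{n\to\infty} d(f^n(x),f^n(y))>0$. The system $(X,f)$ is Li-Yorke chaotic if it has an uncountable scrambled set. *)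

theory Defs
  imports "HOL-Analysis.Analysis"
begin

definition dyn_system :: "'a::metric_space set \<Rightarrow> ('a \<Rightarrow> 'a) \<Rightarrow> bool" where
  "dyn_system X f \<longleftrightarrow> compact X \<and> continuous_on X f \<and> f ` X \<subseteq> X"

definition factor_map :: "'a::metric_space set \<Rightarrow> ('a \<Rightarrow> 'a) \<Rightarrow> 'b::metric_space set \<Rightarrow> ('b \<Rightarrow> 'b) \<Rightarrow> ('a \<Rightarrow> 'b) \<Rightarrow> bool" where
  "factor_map Y g X f \<phi> \<longleftrightarrow> continuous_on Y \<phi> \<and> \<phi> ` Y = X \<and> (\<forall>y\<in>Y. \<phi> (g y) = f (\<phi> y))"

definition transitive_sys :: "'a::metric_space set \<Rightarrow> ('a \<Rightarrow> 'a) \<Rightarrow> bool" where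
  "transitive_sys X f \<longleftrightarrow>
     (\<forall>U V. openin (top_of_set X) U \<and> openin (top_of_set X) V \<and> U \<noteq> {} \<and> V \<noteq> {} \<longrightarrow>
        (\<exists>n>0. {x\<in>U. (f ^^ n) x \<in> V} \<noteq> {}))"

definition scrambled :: "'a::metric_space set \<Rightarrow> ('a \<Rightarrow> 'a) \<Rightarrow> 'a set \<Rightarrow> bool" where
  "scrambled X f S \<longleftrightarrow> S \<subseteq> X \<and> (\<exists>x y. x \<in> S \<and> y \<in> S \<and> x \<noteq> y) \<and>
     (\<forall>x\<in>S. \<forall>y\<in>S. x \<noteq> y \<longrightarrow>
        liminf (\<lambda>n. ereal (dist ((f ^^ n) x) ((f ^^ n) y))) = 0 \<and>
        limsup (\<lambda>n. ereal (dist ((f ^^ n) x) ((f ^^ n) y))) > 0)"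

definition li_yorke_chaotic :: "'a::metric_space set \<Rightarrow> ('a \<Rightarrow> 'a) \<Rightarrow> bool" where
  "li_yorke_chaotic X f \<longleftrightarrow> (\<exists>S. scrambled X f S \<and> uncountable S)"

end

theory Submission
  imports Defs
begin

text \<open>
  Points of Y are pairs (s, d) of a level s and a
  binary digit sequence d, coded as real sequences.  The map is the skew product
  g (s, d) = (min (height d) (2 s), d + 1) over the dyadic odometer d + 1, where
  height d = 2^-k for the first k \<ge> 1 whose marker digit 4k+4 in d is 0.  Since the odometer
  never moves the lowest digit at which two sequences differ, points with different digit
  sequences stay apart forever; hence every scrambled set of Y lies in one countable fibre.
  The factor X collapses all points of level 0 into one point.  For admissible digit
  sequences a counting argument shows that the orbit returns to level 1/4 infinitely often
  while its digits approach those of any other admissible sequence (this gives transitivity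
  and separation), and that at common collapse times all levels are small simultaneously
  (this gives proximality in X).  The uncountably many admissible sequences thus yield an
  uncountable scrambled set in X.
\<close>

subsection \<open>General facts on dynamical systems\<close>

lemma funpow_in: "g ` D \<subseteq> D \<Longrightarrow> x \<in> D \<Longrightarrow> (g ^^ n) x \<in> D"
  by (induction n) auto

lemma continuous_on_funpow:
  assumes "continuous_on D g" "g ` D \<subseteq> D"
  shows "continuous_on D (g ^^ n)"
proof (induction n)
  case (Suc n)
  have "continuous_on D (g \<circ> (g ^^ n))"
    using Suc assms funpow_in[OF assms(2)]
    by (intro continuous_on_compose continuous_on_subset[OF assms(1)]) auto
  then show ?case
    by simp
qed simp

lemma factor_funpow:
  assumes "g ` Y \<subseteq> Y" "\<And>y. y \<in> Y \<Longrightarrow> \<phi> (g y) = f (\<phi> y)" "y \<in> Y"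
  shows "(f ^^ n) (\<phi> y) = \<phi> ((g ^^ n) y)"
proof (induction n)
  case (Suc n)
  have "(g ^^ n) y \<in> Y"
    using assms(1,3) by (rule funpow_in)
  then show ?case
    using Suc assms(2) by simp
qed simp

definition orbit_closure :: "('a::metric_space \<Rightarrow> 'a) \<Rightarrow> 'a \<Rightarrow> 'a set" where
  "orbit_closure g z = closure (range (\<lambda>n. (g ^^ n) z))"

lemma orbit_in_orbit_closure: "(g ^^ n) z \<in> orbit_closure g z"
  unfolding orbit_closure_def by (intro closure_subset[THEN subsetD]) simp

lemma orbit_closure_subset:
  assumes "dyn_system D g" "z \<in> D"
  shows "orbit_closure g z \<subseteq> D"
  unfolding orbit_closure_def using assms funpow_in[of g D z]
  by (intro closure_minimal) (auto simp: dyn_system_def compact_imp_closed)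

lemma orbit_closure_dyn_system:
  assumes D: "dyn_system D g" and z: "z \<in> D"
  shows "dyn_system (orbit_closure g z) g"
proof -
  let ?O = "range (\<lambda>n. (g ^^ n) z)"
  have sub: "orbit_closure g z \<subseteq> D"
    using orbit_closure_subset[OF assms] .
  have cont: "continuous_on (orbit_closure g z) g"
    using D sub unfolding dyn_system_def by (blast intro: continuous_on_subset)
  have "g ((g ^^ n) z) \<in> ?O" for n
    using rangeI[of "\<lambda>n. (g ^^ n) z" "Suc n"] by simp
  then have "g ` ?O \<subseteq> ?O"
    by blast
  then have "g ` ?O \<subseteq> closure ?O"
    using closure_subset by blast
  then have "g ` orbit_closure g z \<subseteq> orbit_closure g z"
    using cont unfolding orbit_closure_def by (intro image_closure_subset) auto
  moreover have "compact (orbit_closure g z)"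
    using D sub unfolding dyn_system_def orbit_closure_def
    by (metis closed_closure compact_Int_closed inf.absorb_iff2)
  ultimately show ?thesis
    using cont unfolding dyn_system_def by blast
qed

lemma open_meets_orbit:
  assumes "open U" "orbit_closure g z \<inter> U \<noteq> {}"
  shows "\<exists>a. (g ^^ a) z \<in> U"
proof -
  have "U \<inter> range (\<lambda>n. (g ^^ n) z) \<noteq> {}"
    using assms open_Int_closure_eq_empty[OF assms(1)] unfolding orbit_closure_def by blast
  then show ?thesis
    by blast
qed

text \<open>The orbit of a recurrent point visits every open set it meets at arbitrarily late
  times: coming back close to z, it follows the orbit of z by continuity of the iterates.\<close>
lemma recurrent_revisits:
  assumes D: "dyn_system D g" and z: "z \<in> D"
    and recurrent: "\<And>e N. 0 < e \<Longrightarrow> \<exists>n\<ge>N. dist ((g ^^ n) z) z < e"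
    and V: "open V" "(g ^^ c) z \<in> V"
  shows "\<exists>n\<ge>N. (g ^^ n) z \<in> V"
proof -
  obtain \<epsilon> where \<epsilon>: "0 < \<epsilon>" "ball ((g ^^ c) z) \<epsilon> \<subseteq> V"
    using V openE by blast
  have gD: "g ` D \<subseteq> D"
    using D unfolding dyn_system_def by blast
  have "continuous_on D (g ^^ c)"
    using D unfolding dyn_system_def by (intro continuous_on_funpow) auto
  then obtain \<delta> where \<delta>: "0 < \<delta>" "\<forall>y\<in>D. dist y z < \<delta> \<longrightarrow> dist ((g ^^ c) y) ((g ^^ c) z) < \<epsilon>"
    using z \<epsilon>(1) unfolding continuous_on_iff by metis
  obtain n where n: "N \<le> n" "dist ((g ^^ n) z) z < \<delta>"
    using recurrent[OF \<delta>(1)] by blast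
  have "dist ((g ^^ c) ((g ^^ n) z)) ((g ^^ c) z) < \<epsilon>"
    using \<delta>(2) funpow_in[OF gD z] n(2) by blast
  then have "(g ^^ (c + n)) z \<in> ball ((g ^^ c) z) \<epsilon>"
    by (simp add: dist_commute funpow_add)
  then have "(g ^^ (c + n)) z \<in> V"
    using \<epsilon>(2) by blast
  then show ?thesis
    using n(1) by (intro exI[of _ "c + n"]) simp
qed

text \<open>Hence the orbit closure of a recurrent point is transitive: the orbit meets every
  nonempty relatively open set, and passes from one to another.\<close>
lemma orbit_closure_transitive:
  assumes D: "dyn_system D g" and z: "z \<in> D"
    and recurrent: "\<And>e N. 0 < e \<Longrightarrow> \<exists>n\<ge>N. dist ((g ^^ n) z) z < e"
  shows "transitive_sys (orbit_closure g z) g"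
  unfolding transitive_sys_def
proof (intro allI impI)
  let ?Y = "orbit_closure g z"
  fix U V
  assume UV: "openin (top_of_set ?Y) U \<and> openin (top_of_set ?Y) V \<and> U \<noteq> {} \<and> V \<noteq> {}"
  obtain U' where U': "open U'" "U = ?Y \<inter> U'"
    using UV openin_open by metis
  obtain V' where V': "open V'" "V = ?Y \<inter> V'"
    using UV openin_open by metis
  obtain a where a: "(g ^^ a) z \<in> U'"
    using open_meets_orbit[OF U'(1)] U'(2) UV by blast
  obtain c where "(g ^^ c) z \<in> V'"
    using open_meets_orbit[OF V'(1)] V'(2) UV by blast
  then obtain n where n: "Suc a \<le> n" "(g ^^ n) z \<in> V'"
    using recurrent_revisits[OF D z recurrent V'(1)] by blast
  have "(g ^^ (n - a)) ((g ^^ a) z) = (g ^^ (n - a + a)) z"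
    by (simp only: funpow_add comp_apply)
  then have "(g ^^ (n - a)) ((g ^^ a) z) \<in> V"
    using n V'(2) orbit_in_orbit_closure[of n g z] by simp
  moreover have "(g ^^ a) z \<in> U"
    using a U'(2) orbit_in_orbit_closure[of a g z] by blast
  ultimately have "(g ^^ a) z \<in> {y \<in> U. (g ^^ (n - a)) y \<in> V}"
    by blast
  moreover have "0 < n - a"
    using n(1) by simp
  ultimately show "\<exists>k>0. {y \<in> U. (g ^^ k) y \<in> V} \<noteq> {}"
    by blast
qed

text \<open>A continuous image of a dynamical system, with a map f semiconjugate to g, is again a
  dynamical system: f is continuous because a continuous map from a compact space onto a
  Hausdorff space is a quotient map.\<close>
lemma image_dyn_system:
  assumes Y: "dyn_system Y g" and \<phi>: "continuous_on Y \<phi>"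
    and semiconj: "\<And>y. y \<in> Y \<Longrightarrow> \<phi> (g y) = f (\<phi> y)"
  shows "dyn_system (\<phi> ` Y) f"
proof -
  let ?X = "\<phi> ` Y"
  have Ycomp: "compact Y" and g: "continuous_on Y g" "g ` Y \<subseteq> Y"
    using Y unfolding dyn_system_def by auto
  have "closed_map (top_of_set Y) (top_of_set ?X) \<phi>"
    using \<phi> Ycomp
    by (intro continuous_imp_closed_map)
      (auto intro: compact_space_subtopology Hausdorff_space_subtopology)
  then have quot: "quotient_map (top_of_set Y) (top_of_set ?X) \<phi>"
    using \<phi> by (intro continuous_closed_imp_quotient_map) auto
  have "continuous_on Y (\<phi> \<circ> g)"
    using \<phi> g by (intro continuous_on_compose) (auto intro: continuous_on_subset)
  then have "continuous_map (top_of_set Y) (top_of_set ?X) (\<phi> \<circ> g)"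
    using g by auto
  then have "continuous_map (top_of_set Y) (top_of_set ?X) (f \<circ> \<phi>)"
    by (rule continuous_map_eq) (simp add: semiconj)
  then have "continuous_map (top_of_set ?X) (top_of_set ?X) f"
    by (rule continuous_compose_quotient_map[OF quot])
  moreover have "f ` ?X \<subseteq> ?X"
    using g semiconj by (auto simp flip: semiconj)
  ultimately show ?thesis
    using Ycomp \<phi> unfolding dyn_system_def by (auto intro: compact_continuous_image)
qed

lemma transitive_factor:
  assumes Y: "dyn_system Y g" and fac: "factor_map Y g X f \<phi>" and tr: "transitive_sys Y g"
  shows "transitive_sys X f"
  unfolding transitive_sys_def
proof (intro allI impI)
  fix U V
  assume UV: "openin (top_of_set X) U \<and> openin (top_of_set X) V \<and> U \<noteq> {} \<and> V \<noteq> {}"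
  have \<phi>: "continuous_on Y \<phi>" "\<phi> ` Y = X" "\<And>y. y \<in> Y \<Longrightarrow> \<phi> (g y) = f (\<phi> y)"
    using fac unfolding factor_map_def by auto
  have maps: "\<phi> \<in> Y \<rightarrow> X"
    using \<phi>(2) by blast
  have pre: "openin (top_of_set Y) (Y \<inter> \<phi> -` W) \<and> Y \<inter> \<phi> -` W \<noteq> {}"
    if "openin (top_of_set X) W" "W \<noteq> {}" for W
  proof
    show "openin (top_of_set Y) (Y \<inter> \<phi> -` W)"
      using \<phi>(1) maps that(1) by (rule continuous_openin_preimage)
    have "W \<subseteq> \<phi> ` Y"
      using openin_imp_subset[OF that(1)] \<phi>(2) by simp
    then show "Y \<inter> \<phi> -` W \<noteq> {}"
      using that(2) by blast
  qed
  have "\<exists>n>0. {y \<in> Y \<inter> \<phi> -` U. (g ^^ n) y \<in> Y \<inter> \<phi> -` V} \<noteq> {}"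
    using tr[unfolded transitive_sys_def, rule_format, of "Y \<inter> \<phi> -` U" "Y \<inter> \<phi> -` V"]
      pre[of U] pre[of V] UV by blast
  then obtain n y where n: "0 < n" "y \<in> Y \<inter> \<phi> -` U" "(g ^^ n) y \<in> Y \<inter> \<phi> -` V"
    by blast
  have "g ` Y \<subseteq> Y" "y \<in> Y"
    using Y n(2) unfolding dyn_system_def by auto
  then have "(f ^^ n) (\<phi> y) = \<phi> ((g ^^ n) y)"
    using factor_funpow[of g Y \<phi> f y n] \<phi>(3) by blast
  then have "\<phi> y \<in> {x \<in> U. (f ^^ n) x \<in> V}"
    using n by simp
  then show "\<exists>n>0. {x \<in> U. (f ^^ n) x \<in> V} \<noteq> {}"
    using n(1) by blast
qed

lemma liminf_eq_0_if_frequently_small: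
  fixes u :: "nat \<Rightarrow> real"
  assumes nonneg: "\<And>n. 0 \<le> u n" and small: "\<And>e N. 0 < e \<Longrightarrow> \<exists>n\<ge>N. u n < e"
  shows "liminf (\<lambda>n. ereal (u n)) = 0"
proof (rule antisym)
  show "0 \<le> liminf (\<lambda>n. ereal (u n))"
    using nonneg by (intro Liminf_bounded) simp
  show "liminf (\<lambda>n. ereal (u n)) \<le> 0"
  proof (rule ereal_le_epsilon2)
    fix e :: real
    assume e: "0 < e"
    show "liminf (\<lambda>n. ereal (u n)) \<le> 0 + ereal e"
    proof (rule ccontr)
      assume "\<not> liminf (\<lambda>n. ereal (u n)) \<le> 0 + ereal e"
      then have "eventually (\<lambda>n. ereal e < ereal (u n)) sequentially"
        by (intro less_LiminfD) simp
      then obtain N where "\<And>n. N \<le> n \<Longrightarrow> e < u n"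
        by (auto simp: eventually_sequentially)
      then show False
        using small[OF e, of N] by force
    qed
  qed
qed

lemma limsup_pos_if_frequently_large:
  fixes u :: "nat \<Rightarrow> real"
  assumes c: "0 < c" and large: "\<And>N. \<exists>n\<ge>N. c \<le> u n"
  shows "0 < limsup (\<lambda>n. ereal (u n))"
proof -
  have "ereal c \<le> limsup (\<lambda>n. ereal (u n))"
  proof (rule ccontr)
    assume "\<not> ereal c \<le> limsup (\<lambda>n. ereal (u n))"
    then have "eventually (\<lambda>n. ereal (u n) < ereal c) sequentially"
      by (intro Limsup_lessD) simp
    then obtain N where "\<And>n. N \<le> n \<Longrightarrow> u n < c"
      by (auto simp: eventually_sequentially)
    then show False
      using large[of N] by force
  qed
  then show ?thesis
    using c by (simp add: less_le_trans[OF _ \<open>ereal c \<le> _\<close>])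
qed

subsection \<open>The product metric on real sequences\<close>

lemma dist_fun_ge_coordinate:
  fixes w w' :: "nat \<Rightarrow> real"
  shows "(1/2)^(to_nat i) * min (dist (w i) (w' i)) 1 \<le> dist w w'"
proof -
  have "summable (\<lambda>n. (1/2)^n * min (dist (w (from_nat n)) (w' (from_nat n))) 1)"
    by (rule summable_comparison_test'[of "\<lambda>n. (1/2)^n"]) (auto simp: summable_geometric_iff)
  then have "(\<Sum>n\<in>{to_nat i}. (1/2)^n * min (dist (w (from_nat n)) (w' (from_nat n))) 1)
      \<le> (\<Sum>n. (1/2)^n * min (dist (w (from_nat n)) (w' (from_nat n))) 1)"
    by (rule sum_le_suminf) auto
  then show ?thesis
    unfolding dist_fun_def by simp
qed

lemma dist_fun_le_uniform:
  fixes w w' :: "nat \<Rightarrow> real"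
  assumes "\<And>i. dist (w i) (w' i) \<le> \<delta>"
  shows "dist w w' \<le> 2 * \<delta> + (1/2)^N"
proof -
  have "dist w w' \<le> 2 * Max {dist (w (from_nat n)) (w' (from_nat n)) |n. n \<le> N} + (1/2)^N"
    by (rule dist_fun_le_dist_first_terms)
  moreover have "Max {dist (w (from_nat n)) (w' (from_nat n)) |n. n \<le> N} \<le> \<delta>"
    by (rule Max.boundedI) (use assms in auto)
  ultimately show ?thesis
    by linarith
qed

lemma dist_fun_small_if_agree:
  assumes "0 < e"
  shows "\<exists>J. \<forall>w w' :: nat \<Rightarrow> real. (\<forall>i<J. w i = w' i) \<longrightarrow> dist w w' < e"
proof -
  obtain N where N: "(1/2::real)^N < e"
    using real_arch_pow_inv[OF assms, of "1/2"] by auto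
  define J where "J = Suc (Max ((from_nat :: nat \<Rightarrow> nat) ` {..N}))"
  have J: "from_nat n < J" if "n \<le> N" for n :: nat
    unfolding J_def using that by (simp add: le_imp_less_Suc)
  show ?thesis
  proof (intro exI[of _ J] allI impI)
    fix w w' :: "nat \<Rightarrow> real"
    assume "\<forall>i<J. w i = w' i"
    have "dist w w' \<le> 2 * Max {dist (w (from_nat n)) (w' (from_nat n)) |n. n \<le> N} + (1/2)^N"
      by (rule dist_fun_le_dist_first_terms)
    also have "Max {dist (w (from_nat n)) (w' (from_nat n)) |n. n \<le> N} \<le> 0"
      by (rule Max.boundedI) (use J \<open>\<forall>i<J. w i = w' i\<close> in auto)
    finally show "dist w w' < e"
      using N by simp
  qed
qed

subsection \<open>Binary digit sequences and the odometer\<close>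

text \<open>A sequence d :: nat \<Rightarrow> bool is read as a dyadic integer with d j the digit of 2^j.\<close>
definition odo_succ :: "(nat \<Rightarrow> bool) \<Rightarrow> nat \<Rightarrow> bool" where
  "odo_succ d j = (d j \<noteq> (\<forall>i<j. d i))"

definition odo_add :: "(nat \<Rightarrow> bool) \<Rightarrow> nat \<Rightarrow> nat \<Rightarrow> bool" where
  "odo_add d n = (odo_succ ^^ n) d"

definition digits_val :: "nat \<Rightarrow> (nat \<Rightarrow> bool) \<Rightarrow> nat" where
  "digits_val M d = (\<Sum>j<M. if d j then 2^j else 0)"

lemma digits_val_0 [simp]: "digits_val 0 d = 0"
  by (simp add: digits_val_def)

lemma digits_val_Suc: "digits_val (Suc M) d = digits_val M d + 2^M * (if d M then 1 else 0)"
  by (simp add: digits_val_def)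

lemma digits_val_less: "digits_val M d < 2^M"
  by (induction M) (simp_all add: digits_val_Suc)

lemma digits_val_all_ones: "(\<forall>i<M. d i) \<longleftrightarrow> digits_val M d + 1 = 2^M"
proof (induction M)
  case (Suc M)
  have "(\<forall>i<Suc M. d i) \<longleftrightarrow> (\<forall>i<M. d i) \<and> d M"
    using less_Suc_eq by auto
  then show ?case
    using Suc digits_val_less[of M d] by (auto simp: digits_val_Suc)
qed simp

lemma digits_val_odo_succ: "digits_val M (odo_succ d) = (digits_val M d + 1) mod 2^M"
proof (induction M)
  case (Suc M)
  have less: "digits_val M d < 2^M" by (rule digits_val_less)
  show ?case
  proof (cases "\<forall>i<M. d i")
    case True
    then have full: "digits_val M d + 1 = 2^M"
      using digits_val_all_ones by blast
    have "odo_succ d M = (\<not> d M)"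
      using True by (simp add: odo_succ_def)
    show ?thesis
    proof (cases "d M")
      case True
      then have "digits_val (Suc M) d + 1 = 2^Suc M"
        using full by (simp add: digits_val_Suc)
      moreover have "digits_val (Suc M) (odo_succ d) = 0"
        using Suc full True \<open>odo_succ d M = (\<not> d M)\<close> by (simp add: digits_val_Suc)
      ultimately show ?thesis by simp
    qed (use Suc full \<open>odo_succ d M = (\<not> d M)\<close> in \<open>simp add: digits_val_Suc\<close>)
  next
    case False
    then have "digits_val M d + 1 < 2^M"
      using digits_val_all_ones[of M d] less by auto
    moreover have "odo_succ d M = d M"
      using False by (auto simp: odo_succ_def)
    ultimately show ?thesis
      using Suc by (auto simp: digits_val_Suc)
  qed
qed simp

lemma odo_add_0 [simp]: "odo_add d 0 = d"
  by (simp add: odo_add_def)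

lemma odo_add_Suc: "odo_add d (Suc n) = odo_succ (odo_add d n)"
  by (simp add: odo_add_def)

lemma digits_val_odo_add: "digits_val M (odo_add d n) = (digits_val M d + n) mod 2^M"
  by (induction n) (simp_all add: digits_val_less odo_add_Suc digits_val_odo_succ mod_Suc_eq)

lemma bit_add_pow:
  fixes a b :: nat
  assumes "a < 2^M"
  shows "bit (a + 2^M * b) j = (if j < M then bit a j else bit b (j - M))"
proof (cases "j < M")
  case True
  have "(2::nat)^M = 2^j * 2^(M-j)"
    using True by (simp add: power_add[symmetric])
  then have "a + 2^M * b = a + 2^(M-j) * b * 2^j"
    by (simp add: ac_simps)
  then have "(a + 2^M * b) div 2^j = (a + 2^(M-j) * b * 2^j) div 2^j"
    by (simp only:)
  also have "\<dots> = a div 2^j + 2^(M-j) * b"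
    by simp
  finally have "(a + 2^M * b) div 2^j = a div 2^j + 2^(M-j) * b" .
  moreover have "even (2^(M-j) * b :: nat)"
    using True by simp
  ultimately show ?thesis
    using True by (simp add: bit_iff_odd)
next
  case False
  have "(a + 2^M * b) div 2^M = b"
    using assms by simp
  then have "(a + 2^M * b) div 2^j = b div 2^(j - M)"
    using False by (metis div_exp_eq le_add_diff_inverse not_less)
  then show ?thesis
    using False by (simp add: bit_iff_odd)
qed

lemma bit_digits_val: "j < M \<Longrightarrow> bit (digits_val M d) j = d j"
proof (induction M)
  case (Suc M)
  define c :: nat where "c = (if d M then 1 else 0)"
  have "digits_val (Suc M) d = digits_val M d + 2^M * c"
    by (simp add: digits_val_Suc c_def)
  then have key: "bit (digits_val (Suc M) d) j =
      (if j < M then bit (digits_val M d) j else bit c (j - M))"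
    using bit_add_pow[OF digits_val_less] by simp
  show ?case
  proof (cases "j < M")
    case False
    then have "j = M"
      using Suc.prems by simp
    then show ?thesis
      using key by (simp add: c_def bit_0)
  qed (use key Suc in simp)
qed simp

lemma bit_mod_pow: "q < f \<Longrightarrow> bit ((a::nat) mod 2^f) q = bit a q"
  by (simp add: bit_take_bit_iff flip: take_bit_eq_mod)

lemma odo_add_bit: "j < M \<Longrightarrow> odo_add d n j = bit (digits_val M d + n) j"
proof -
  assume j: "j < M"
  have "odo_add d n j = bit (digits_val M (odo_add d n)) j"
    using bit_digits_val[OF j] by simp
  also have "\<dots> = bit ((digits_val M d + n) mod 2^M) j"
    by (simp add: digits_val_odo_add)
  also have "\<dots> = bit (digits_val M d + n) j"
    using j by (rule bit_mod_pow)
  finally show ?thesis .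
qed

lemma digits_val_split:
  "digits_val (m + k) d = digits_val m d + 2^m * digits_val k (\<lambda>j. d (m + j))"
  by (induction k) (simp_all add: digits_val_Suc power_add algebra_simps)

lemma digits_val_disjoint:
  "(\<And>j. j < M \<Longrightarrow> \<not> (a j \<and> b j)) \<Longrightarrow> digits_val M a + digits_val M b = digits_val M (\<lambda>j. a j \<or> b j)"
  unfolding digits_val_def sum.distrib[symmetric] by (intro sum.cong) auto

lemma digits_val_mod: "m \<le> M \<Longrightarrow> digits_val m d = digits_val M d mod 2^m"
  by (metis digits_val_less digits_val_split le_Suc_ex mod_less mod_mult_self2)

lemma pow_le_of_bit: "bit (c::nat) q \<Longrightarrow> 2^q \<le> c"
proof -
  assume "bit c q"
  then have "odd (c div 2^q)"
    by (simp add: bit_iff_odd)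
  then have "1 \<le> c div 2^q"
    by (cases "c div 2^q") auto
  then have "2^q * 1 \<le> 2^q * (c div 2^q)"
    by (intro mult_left_mono) auto
  also have "\<dots> \<le> c"
    by (simp add: times_div_less_eq_dividend)
  finally show ?thesis by simp
qed

lemma digits_val_ge_digit: "j < M \<Longrightarrow> d j \<Longrightarrow> 2^j \<le> digits_val M d"
  using pow_le_of_bit bit_digits_val by metis

lemma highest_differing_bit:
  "(w::nat) < v \<Longrightarrow> \<exists>f. bit v f \<and> \<not> bit w f \<and> w div 2^(Suc f) = v div 2^(Suc f)"
proof (induction v arbitrary: w rule: less_induct)
  case (less v)
  show ?case
  proof (cases "w div 2 = v div 2")
    case True
    then have "odd v" "even w"
      using less.prems by presburger+
    then show ?thesis
      using True by (intro exI[of _ 0]) (simp add: bit_0)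
  next
    case False
    have "w div 2 \<le> v div 2"
      using less.prems by (intro div_le_mono) simp
    then have "w div 2 < v div 2"
      using False by linarith
    moreover have "v div 2 < v"
      using less.prems by simp
    ultimately obtain f where f: "bit (v div 2) f" "\<not> bit (w div 2) f"
        "w div 2 div 2^(Suc f) = v div 2 div 2^(Suc f)"
      using less.IH by blast
    moreover have "w div 2^(Suc (Suc f)) = w div 2 div 2^(Suc f)"
      using div_exp_eq[of w 1 "Suc f"] by simp
    moreover have "v div 2^(Suc (Suc f)) = v div 2 div 2^(Suc f)"
      using div_exp_eq[of v 1 "Suc f"] by simp
    ultimately show ?thesis
      by (intro exI[of _ "Suc f"]) (simp only: bit_Suc, simp)
  qed
qed

lemma highest_differing_bit_gap:
  fixes v w :: nat
  assumes "bit v f" "\<not> bit w f" "w div 2^(Suc f) = v div 2^(Suc f)"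
  shows "v mod 2^f \<le> v - 1 - w"
proof -
  have "take_bit (Suc f) w = take_bit f w"
    using assms(2) by (simp only: take_bit_Suc_from_most) simp
  then have w: "w mod 2^(Suc f) = w mod 2^f"
    by (simp only: take_bit_eq_mod)
  have "take_bit (Suc f) v = 2^f + take_bit f v"
    using assms(1) by (simp only: take_bit_Suc_from_most) simp
  then have v: "v mod 2^(Suc f) = 2^f + v mod 2^f"
    by (simp only: take_bit_eq_mod)
  have "w = w div 2^(Suc f) * 2^(Suc f) + w mod 2^(Suc f)"
    "v = v div 2^(Suc f) * 2^(Suc f) + v mod 2^(Suc f)"
    by (simp_all only: div_mult_mod_eq)
  moreover have "w mod 2^f < 2^f" by simp
  moreover have "w div 2^(Suc f) * 2^(Suc f) = v div 2^(Suc f) * 2^(Suc f)"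
    using assms(3) by simp
  ultimately show ?thesis
    using w v by linarith
qed

lemma bit_above: "bit (a::nat) (Suc f + j) = bit (a div 2^(Suc f)) j"
  by (simp only: bit_iff_odd div_exp_eq)

lemma exp_ge_add_8: "6 \<le> n \<Longrightarrow> n + 8 \<le> (2::nat)^n"
  by (induction n rule: dec_induct) simp_all

lemma odo_succ_first_diff:
  assumes "\<forall>i<j0. d i = d' i" "d j0 \<noteq> d' j0"
  shows "(\<forall>i<j0. odo_succ d i = odo_succ d' i) \<and> odo_succ d j0 \<noteq> odo_succ d' j0"
proof -
  have "(\<forall>i<k. d i) = (\<forall>i<k. d' i)" if "k \<le> j0" for k
    using assms that by auto
  then show ?thesis
    using assms unfolding odo_succ_def by auto
qed

lemma odo_add_first_diff:
  assumes "\<forall>i<j0. d i = d' i" "d j0 \<noteq> d' j0"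
  shows "odo_add d n j0 \<noteq> odo_add d' n j0"
proof -
  have "(\<forall>i<j0. odo_add d n i = odo_add d' n i) \<and> odo_add d n j0 \<noteq> odo_add d' n j0"
  proof (induction n)
    case (Suc n)
    then show ?case
      unfolding odo_add_Suc by (intro odo_succ_first_diff) auto
  qed (use assms in simp)
  then show ?thesis by blast
qed

lemma first_diff_exists:
  assumes "d \<noteq> (d' :: nat \<Rightarrow> bool)"
  shows "\<exists>j0. (\<forall>i<j0. d i = d' i) \<and> d j0 \<noteq> d' j0"
proof -
  define j0 where "j0 = (LEAST j. d j \<noteq> d' j)"
  have "\<exists>j. d j \<noteq> d' j"
    using assms by auto
  then have "d j0 \<noteq> d' j0"
    unfolding j0_def by (rule LeastI_ex)
  moreover have "\<forall>i<j0. d i = d' i"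
    unfolding j0_def using not_less_Least by blast
  ultimately show ?thesis by blast
qed

subsection \<open>Heights and levels\<close>

text \<open>The level is the real coordinate of the skew product: it is
  doubled at each step but capped by the height of the current digit sequence.\<close>
definition marker :: "nat \<Rightarrow> nat" where
  "marker k = 4 * k + 4"

definition height :: "(nat \<Rightarrow> bool) \<Rightarrow> real" where
  "height d = (if \<exists>k. 1 \<le> k \<and> \<not> d (marker k)
     then (1/2)^(LEAST k. 1 \<le> k \<and> \<not> d (marker k)) else 0)"

definition Levels :: "real set" where
  "Levels = insert 0 (range (\<lambda>k. (1/2)^(Suc k)))"

primrec level :: "(nat \<Rightarrow> bool) \<Rightarrow> real \<Rightarrow> nat \<Rightarrow> real" where
  "level d s 0 = s"
| "level d s (Suc n) = min (height (odo_add d n)) (2 * level d s n)"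

lemma height_some:
  "\<exists>k. 1 \<le> k \<and> \<not> d (marker k) \<Longrightarrow> height d = (1/2)^(LEAST k. 1 \<le> k \<and> \<not> d (marker k))"
  unfolding height_def by (rule if_P)

lemma height_none: "\<not> (\<exists>k. 1 \<le> k \<and> \<not> d (marker k)) \<Longrightarrow> height d = 0"
  unfolding height_def by (rule if_not_P)

lemma height_lower: "1 \<le> k \<Longrightarrow> \<not> d (marker k) \<Longrightarrow> (1/2)^k \<le> height d"
proof -
  assume k: "1 \<le> k" "\<not> d (marker k)"
  then have "(LEAST k. 1 \<le> k \<and> \<not> d (marker k)) \<le> k"
    by (intro Least_le) auto
  then have "(1/2::real)^k \<le> (1/2)^(LEAST k. 1 \<le> k \<and> \<not> d (marker k))"
    by (intro power_decreasing) auto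
  moreover have "\<exists>k. 1 \<le> k \<and> \<not> d (marker k)"
    using k by blast
  ultimately show ?thesis
    using height_some by simp
qed

lemma height_upper:
  assumes "\<And>j. 1 \<le> j \<Longrightarrow> j \<le> k \<Longrightarrow> d (marker j)"
  shows "height d \<le> (1/2)^(k+1)"
proof (cases "\<exists>k. 1 \<le> k \<and> \<not> d (marker k)")
  case True
  let ?L = "LEAST k. 1 \<le> k \<and> \<not> d (marker k)"
  have L: "1 \<le> ?L \<and> \<not> d (marker ?L)"
    using True by (rule LeastI_ex)
  have "\<not> ?L \<le> k"
  proof
    assume "?L \<le> k"
    then show False
      using L assms by blast
  qed
  then have "k + 1 \<le> ?L"
    by simp
  then have "(1/2::real)^?L \<le> (1/2)^(k+1)"
    by (intro power_decreasing) auto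
  then show ?thesis
    using height_some[OF True] by simp
qed (simp add: height_none)

lemma height_in_Levels: "height d \<in> Levels"
proof (cases "\<exists>k. 1 \<le> k \<and> \<not> d (marker k)")
  case True
  let ?L = "LEAST k. 1 \<le> k \<and> \<not> d (marker k)"
  have "?L = Suc (?L - 1)"
    using LeastI_ex[OF True] by simp
  then have "(1/2::real)^?L \<in> range (\<lambda>k. (1/2)^(Suc k))"
    by (metis rangeI)
  then show ?thesis
    using height_some[OF True] unfolding Levels_def by simp
qed (simp add: height_none Levels_def)

lemma Levels_nonneg: "s \<in> Levels \<Longrightarrow> 0 \<le> s"
  by (auto simp: Levels_def)

lemma height_nonneg: "0 \<le> height d"
  by (rule Levels_nonneg[OF height_in_Levels])

lemma height_le_half: "height d \<le> 1/2"
  using height_upper[of 0 d] by simp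

lemma height_quarter: "d (marker 1) \<Longrightarrow> \<not> d (marker 2) \<Longrightarrow> height d = 1/4"
proof -
  assume d: "d (marker 1)" "\<not> d (marker 2)"
  have "height d \<le> (1/2)^(1+1)"
    using d by (intro height_upper) (simp add: le_antisym)
  moreover have "(1/2)^2 \<le> height d"
    using d by (intro height_lower) auto
  ultimately show ?thesis
    by (simp add: power2_eq_square)
qed

lemma Least_agree:
  fixes P Q :: "nat \<Rightarrow> bool"
  assumes agree: "\<And>k. k \<le> k0 \<Longrightarrow> P k = Q k" and "P k0"
  shows "(LEAST k. P k) = (LEAST k. Q k)"
proof (rule antisym)
  have "Q k0"
    using assms by simp
  then have Qb: "Q (LEAST k. Q k)" "(LEAST k. Q k) \<le> k0"
    by (auto intro: LeastI Least_le)
  have Pa: "P (LEAST k. P k)" "(LEAST k. P k) \<le> k0"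
    using \<open>P k0\<close> by (auto intro: LeastI Least_le)
  show "(LEAST k. P k) \<le> (LEAST k. Q k)"
    by (rule Least_le) (use Qb agree in auto)
  show "(LEAST k. Q k) \<le> (LEAST k. P k)"
    by (rule Least_le) (use Pa agree in auto)
qed

lemma height_agree:
  assumes agree: "\<And>j. 1 \<le> j \<Longrightarrow> j \<le> N \<Longrightarrow> d (marker j) = d' (marker j)"
  shows "\<bar>height d - height d'\<bar> \<le> (1/2)^N"
proof (cases "\<exists>k. 1 \<le> k \<and> k \<le> N \<and> \<not> d (marker k)")
  case True
  then obtain k0 where k0: "1 \<le> k0" "k0 \<le> N" "\<not> d (marker k0)"
    by blast
  have "(LEAST k. 1 \<le> k \<and> \<not> d (marker k)) = (LEAST k. 1 \<le> k \<and> \<not> d' (marker k))"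
    using k0 agree by (intro Least_agree[of k0]) auto
  moreover have "\<exists>k. 1 \<le> k \<and> \<not> d (marker k)" "\<exists>k. 1 \<le> k \<and> \<not> d' (marker k)"
    using k0 agree by auto
  ultimately have "height d = height d'"
    using height_some by simp
  then show ?thesis by simp
next
  case False
  have "height d \<le> (1/2)^(N+1)"
    by (intro height_upper) (use False in auto)
  moreover have "height d' \<le> (1/2)^(N+1)"
    by (intro height_upper) (use False agree in auto)
  moreover have "(1/2::real)^(N+1) \<le> (1/2)^N"
    by (intro power_decreasing) auto
  ultimately show ?thesis
    using height_nonneg[of d] height_nonneg[of d'] by linarith
qed

lemma Levels_step: "s \<in> Levels \<Longrightarrow> min (height d) (2 * s) \<in> Levels"
proof (cases "height d \<le> 2 * s")
  case True
  then show ?thesis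
    using height_in_Levels by (simp add: min_def)
next
  case False
  assume s: "s \<in> Levels"
  have "2 * s < 1/2"
    using False height_le_half[of d] by linarith
  have "2 * s \<in> Levels"
  proof (cases "s = 0")
    case False
    then obtain k where k: "s = (1/2)^(Suc k)"
      using s by (auto simp: Levels_def)
    then have "k \<noteq> 0"
      using \<open>2 * s < 1/2\<close> by (rule_tac notI) simp
    then obtain k' where "k = Suc k'"
      using not0_implies_Suc by blast
    then have "2 * s = (1/2)^(Suc k')"
      using k by simp
    then show ?thesis
      by (simp add: Levels_def)
  qed (simp add: Levels_def)
  then show ?thesis
    using False by (simp add: min_def)
qed

lemma level_in_Levels: "s \<in> Levels \<Longrightarrow> level d s n \<in> Levels"
  by (induction n) (simp_all add: Levels_step)

text \<open>A lower bound on the level after n steps from lower bounds on the heights met on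
  the way: the level can at most double per step.\<close>
lemma level_lower:
  assumes "\<And>i. i < n \<Longrightarrow> (1/2)^(c + (n - 1 - i)) \<le> height (odo_add d i)"
    and "(1/2)^(c + n) \<le> s"
  shows "(1/2)^c \<le> level d s n"
  using assms
proof (induction n arbitrary: c)
  case (Suc n)
  have "(1/2)^(c + 1) \<le> level d s n"
  proof (rule Suc.IH)
    fix i
    assume "i < n"
    then show "(1/2)^(c + 1 + (n - 1 - i)) \<le> height (odo_add d i)"
      using Suc.prems(1)[of i] by (simp add: Suc_diff_Suc)
  next
    show "(1/2)^(c + 1 + n) \<le> s"
      using Suc.prems(2) by (simp add: ac_simps)
  qed
  then show ?case
    using Suc.prems(1)[of n] by simp
qed simp

lemma Levels_gap: "s \<in> Levels \<Longrightarrow> s \<noteq> 1/4 \<Longrightarrow> 1/8 \<le> \<bar>1/4 - s\<bar>"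
proof -
  assume s: "s \<in> Levels" "s \<noteq> 1/4"
  show ?thesis
  proof (cases "s = 0")
    case False
    then obtain k where k: "s = (1/2)^(Suc k)"
      using s(1) by (auto simp: Levels_def)
    consider "k = 0" | "k = 1" | "2 \<le> k"
      by linarith
    then show ?thesis
    proof cases
      case 3
      then have "s \<le> (1/2)^3"
        unfolding k by (intro power_decreasing) auto
      moreover have "0 \<le> s"
        using s(1) by (rule Levels_nonneg)
      ultimately show ?thesis
        by (simp add: power3_eq_cube)
    qed (use k s(2) in \<open>simp_all add: power2_eq_square\<close>)
  qed simp
qed

subsection \<open>Admissible digit sequences\<close>

text \<open>The free positions 8s+14 leave room for
  uncountably many of them.\<close>
definition admissible :: "(nat \<Rightarrow> bool) \<Rightarrow> bool" where
  "admissible x \<longleftrightarrow> (\<forall>j. x j \<longrightarrow> (\<exists>t\<ge>2. j = 4 * t + 2)) \<and> (\<forall>s\<ge>1. x (8 * s + 2))"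

lemma admissible_digit: "admissible x \<Longrightarrow> x j \<Longrightarrow> \<exists>t\<ge>2. j = 4 * t + 2"
  unfolding admissible_def by blast

lemma admissible_forced: "admissible x \<Longrightarrow> 1 \<le> s \<Longrightarrow> x (8 * s + 2)"
  unfolding admissible_def by blast

lemma admissible_no_marker: "admissible x \<Longrightarrow> \<not> x (marker k)"
proof
  assume "admissible x" "x (marker k)"
  then obtain t where "4 * k + 4 = 4 * t + 2"
    using admissible_digit unfolding marker_def by blast
  then show False
    by presburger
qed

text \<open>Forced digits are 8 apart, so one of them lies in every window of length 8.\<close>
lemma admissible_forced_near:
  assumes "admissible x" "3 \<le> u"
  shows "\<exists>q. x q \<and> 4 * u - 6 \<le> q \<and> q \<le> 4 * u"
proof -
  define s where "s = (u - 1) div 2"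
  have u: "u - 1 = 2 * s + (u - 1) mod 2" "(u - 1) mod 2 < 2"
    unfolding s_def by simp_all
  then have "1 \<le> s"
    using assms(2) by linarith
  then have "x (8 * s + 2)"
    by (rule admissible_forced[OF assms(1)])
  moreover have "4 * u - 6 \<le> 8 * s + 2" "8 * s + 2 \<le> 4 * u"
    using u assms(2) by linarith+
  ultimately show ?thesis
    by blast
qed

lemma admissible_lower_part:
  assumes x: "admissible x" and xf: "x (4 * t + 2)" and fm: "4 * t + 2 < m"
  shows "t \<le> 2 + digits_val m x mod 2^(4 * t + 2)"
proof (cases "3 \<le> t")
  case True
  obtain q where q: "x q" "4 * t - 6 \<le> q" "q \<le> 4 * t"
    using admissible_forced_near[OF x True] by blast
  have "bit (digits_val m x) q"
    using bit_digits_val[of q m x] q fm by simp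
  then have "bit (digits_val m x mod 2^(4 * t + 2)) q"
    using q(3) bit_mod_pow[of q "4 * t + 2"] by simp
  then have "2^q \<le> digits_val m x mod 2^(4 * t + 2)"
    by (rule pow_le_of_bit)
  moreover have "q + 8 \<le> 2^q"
    using q(2) True by (intro exp_ge_add_8) simp
  ultimately show ?thesis
    using q(2) by linarith
next
  case False
  have "2 \<le> t"
    using admissible_digit[OF x xf] by auto
  then show ?thesis
    using False by simp
qed

lemma marker_zero_below:
  assumes x: "admissible x" and w: "w < digits_val (4 * u + 1) x"
  shows "\<exists>k. 1 \<le> k \<and> k \<le> 2 + (digits_val (4 * u + 1) x - 1 - w) \<and> marker k < 4 * u + 1
           \<and> \<not> bit w (marker k)"
proof -
  let ?m = "4 * u + 1"
  let ?v = "digits_val ?m x"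
  obtain f where f: "bit ?v f" "\<not> bit w f" "w div 2^(Suc f) = ?v div 2^(Suc f)"
    using highest_differing_bit[OF w] by blast
  have fm: "f < ?m"
  proof (rule ccontr)
    assume "\<not> f < ?m"
    then have "(2::nat)^?m \<le> 2^f"
      by (intro power_increasing) auto
    then show False
      using pow_le_of_bit[OF f(1)] digits_val_less[of ?m x] by linarith
  qed
  have xf: "x f"
    using f(1) bit_digits_val[OF fm] by simp
  then obtain k where k: "2 \<le> k" "f = 4 * k + 2"
    using admissible_digit[OF x] by blast
  have "4 * k + 4 < 4 * u + 1"
    using fm unfolding k(2) by presburger
  then have mk: "marker k = Suc f + 1" "marker k < ?m"
    unfolding marker_def k(2) by simp_all
  have "bit w (marker k) = bit (w div 2^(Suc f)) 1"
    using mk(1) bit_above[of w f 1] by simp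
  also have "\<dots> = bit ?v (marker k)"
    using mk(1) f(3) bit_above[of ?v f 1] by simp
  also have "\<dots> = x (marker k)"
    using bit_digits_val mk(2) by simp
  finally have "\<not> bit w (marker k)"
    using admissible_no_marker[OF x] by simp
  moreover have "k \<le> 2 + (?v - 1 - w)"
    using admissible_lower_part[OF x xf[unfolded k(2)] fm[unfolded k(2)]]
      highest_differing_bit_gap[OF f, unfolded k(2)] by linarith
  moreover have "1 \<le> k"
    using k(1) by simp
  ultimately show ?thesis
    using mk(2) by blast
qed

lemma admissible_val_large:
  assumes "admissible x" "3 \<le> u"
  shows "2^(4 * u - 6) \<le> digits_val (4 * u + 1) x"
proof -
  obtain q where q: "x q" "4 * u - 6 \<le> q" "q \<le> 4 * u"
    using admissible_forced_near[OF assms] by blast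
  have "(2::nat)^(4 * u - 6) \<le> 2^q"
    using q(2) by (intro power_increasing) auto
  also have "\<dots> \<le> digits_val (4 * u + 1) x"
    using q by (intro digits_val_ge_digit) auto
  finally show ?thesis .
qed

lemma admissible_low_digits: "admissible x \<Longrightarrow> digits_val 13 x = 1024"
proof -
  assume x: "admissible x"
  have "x j = (j = 10)" if "j < 13" for j
  proof
    assume "x j"
    then obtain t where "2 \<le> t" "j = 4 * t + 2"
      using admissible_digit[OF x] by blast
    then show "j = 10"
      using that by simp
  next
    assume "j = 10"
    then show "x j"
      using admissible_forced[OF x, of 1] by simp
  qed
  then have "digits_val 13 x = digits_val 13 (\<lambda>j. j = 10)"
    unfolding digits_val_def by (intro sum.cong) auto
  also have "\<dots> = 1024"
    by (simp add: digits_val_def eval_nat_numeral)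
  finally show ?thesis .
qed

text \<open>One step before an orbit of the odometer reaches the value of an admissible sequence
  (modulo 2^M), its digits below 13 are those of 1023, so the height there is exactly 1/4.\<close>
lemma height_before_arrival:
  assumes x: "admissible x" and u: "3 \<le> u" "4 * u + 1 \<le> M"
    and arrive: "digits_val M p + Suc n = 2^M + digits_val (4 * u + 1) x"
  shows "height (odo_add p n) = 1/4"
proof -
  let ?v = "digits_val (4 * u + 1) x"
  have "?v = digits_val 13 x + 2^13 * digits_val (4 * u + 1 - 13) (\<lambda>j. x (13 + j))"
    using digits_val_split[of 13 "4 * u + 1 - 13" x] u(1) by simp
  then obtain T where T: "?v = 1024 + 2^13 * T"
    using admissible_low_digits[OF x] by auto
  have "(2::nat)^(4 * u + 1) \<le> 2^M"
    using u(2) by (intro power_increasing) auto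
  then have small: "1023 + 2^13 * T < (2::nat)^M"
    using T digits_val_less[of "4 * u + 1" x] by linarith
  have "digits_val M p + n = (1023 + 2^13 * T) + 2^M * 1"
    using arrive T by simp
  then have "odo_add p n j = bit (1023::nat) j" if "j < 13" for j
    using that u odo_add_bit[of j M p n] bit_add_pow[OF small, of 1 j] bit_add_pow[of 1023 13 T j]
    by simp
  from this[of 8] this[of 12] show ?thesis
    by (intro height_quarter) (simp_all add: marker_def bit_numeral_simps)
qed

text \<open>Before the odometer wraps around modulo 2^(4U+1), the zero digit of p at the marker
  position 4U+4 is still present, bounding the height from below.\<close>
lemma height_before_wrap:
  assumes p: "admissible p" and U: "1 \<le> U"
    and nowrap: "digits_val (4 * U + 1) p + i < 2^(4 * U + 1)"
  shows "(1/2)^U \<le> height (odo_add p i)"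
proof -
  let ?M = "4 * U + 1"
  have "odo_add p i (marker U) = bit (digits_val (?M + 4) p + i) (?M + 3)"
    unfolding marker_def by (subst odo_add_bit[of _ "?M + 4"]) (simp_all add: add.commute)
  also have "digits_val (?M + 4) p = digits_val ?M p + 2^?M * digits_val 4 (\<lambda>j. p (?M + j))"
    by (rule digits_val_split)
  also have "bit (digits_val ?M p + 2^?M * digits_val 4 (\<lambda>j. p (?M + j)) + i) (?M + 3)
      = bit (digits_val 4 (\<lambda>j. p (?M + j))) 3"
    using bit_add_pow[OF nowrap, of "digits_val 4 (\<lambda>j. p (?M + j))" "?M + 3"] by (simp add: ac_simps)
  also have "\<dots> = p (marker U)"
    using bit_digits_val[of 3 4] by (simp add: marker_def add.commute)
  finally have "\<not> odo_add p i (marker U)"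
    using admissible_no_marker[OF p] by simp
  then show ?thesis
    using U by (rule height_lower[rotated])
qed

text \<open>After the wrap-around, the orbit is at w + 2^M with w below the target value, and the
  counting estimate applies.\<close>
lemma height_after_wrap:
  assumes x: "admissible x" and w: "w < digits_val (4 * u + 1) x" and M: "4 * u + 1 \<le> M"
    and wrap: "digits_val M p + i = w + 2^M"
  shows "(1/2)^(2 + (digits_val (4 * u + 1) x - 1 - w)) \<le> height (odo_add p i)"
proof -
  obtain k where k: "1 \<le> k" "k \<le> 2 + (digits_val (4 * u + 1) x - 1 - w)"
      "marker k < 4 * u + 1" "\<not> bit w (marker k)"
    using marker_zero_below[OF x w] by blast
  have "(2::nat)^(4 * u + 1) \<le> 2^M"
    using M by (intro power_increasing) auto
  then have "w < 2^M"
    using w digits_val_less[of "4 * u + 1" x] by linarith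
  then have "odo_add p i (marker k) = bit w (marker k)"
    using odo_add_bit[of "marker k" M p i] bit_add_pow[of w M 1 "marker k"] k(3) M wrap by simp
  then have "(1/2)^k \<le> height (odo_add p i)"
    using k(1,4) by (intro height_lower) auto
  moreover have "(1/2::real)^(2 + (digits_val (4 * u + 1) x - 1 - w)) \<le> (1/2)^k"
    using k(2) by (intro power_decreasing) auto
  ultimately show ?thesis
    by linarith
qed

lemma digits_val_odo_add_target:
  assumes m: "m \<le> M" and v: "v < 2^m" and n: "digits_val M d + n = 2^M + v"
  shows "digits_val m (odo_add d n) = v"
proof -
  have "digits_val m (odo_add d n) = (digits_val M d mod 2^m + n) mod 2^m"
    unfolding digits_val_odo_add using digits_val_mod[OF m] by simp
  also have "\<dots> = (2^M + v) mod 2^m"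
    unfolding n[symmetric] by (simp add: mod_add_left_eq)
  also have "(2::nat)^M = 2^m * 2^(M - m)"
    using m by (simp flip: power_add)
  finally show ?thesis
    using v by simp
qed

lemma height_on_approach:
  assumes p: "admissible p" and x: "admissible x" and u: "3 \<le> u"
    and arrive: "digits_val (4 * (u + 2) + 1) p + n = 2^(4 * (u + 2) + 1) + digits_val (4 * u + 1) x"
    and i: "i < n"
  shows "(1/2)^(2 + (n - 1 - i)) \<le> height (odo_add p i)"
proof -
  let ?M = "4 * (u + 2) + 1"
  let ?vp = "digits_val ?M p" and ?v = "digits_val (4 * u + 1) x"
  show ?thesis
  proof (cases "?vp + i < 2^?M")
    case True
    have "u + 2 \<le> 4 * u - 6 + 8"
      using u by simp
    also have "\<dots> \<le> 2^(4 * u - 6)"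
      using u by (intro exp_ge_add_8) simp
    also have "\<dots> \<le> n - 1 - i"
      using admissible_val_large[OF x u] True arrive by linarith
    finally have "(1/2::real)^(2 + (n - 1 - i)) \<le> (1/2)^(u + 2)"
      by (intro power_decreasing) auto
    also have "\<dots> \<le> height (odo_add p i)"
      using p True by (intro height_before_wrap) auto
    finally show ?thesis .
  next
    case False
    have below: "?vp + i - 2^?M < ?v"
      using i arrive False by linarith
    have wrap: "?vp + i = (?vp + i - 2^?M) + 2^?M"
      using False by simp
    have "(1/2)^(2 + (?v - 1 - (?vp + i - 2^?M))) \<le> height (odo_add p i)"
      using height_after_wrap[OF x below _ wrap] by simp
    moreover have "?v - 1 - (?vp + i - 2^?M) = n - 1 - i"
      using False arrive i by linarith
    ultimately show ?thesis
      by simp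
  qed
qed

text \<open>Approach: from any admissible p the odometer reaches, after at least 2^(4u-6) steps,
  the first 4u+1 digits of any admissible x, and the level started at 1/4 is again 1/4 on
  arrival: just before arrival the height is 1/4, and on the way it never drops too low.\<close>
lemma approach:
  assumes p: "admissible p" and x: "admissible x" and u: "3 \<le> u"
  shows "\<exists>n. 2^(4 * u - 6) \<le> n \<and> digits_val (4 * u + 1) (odo_add p n) = digits_val (4 * u + 1) x
           \<and> level p (1/4) n = 1/4"
proof -
  let ?M = "4 * (u + 2) + 1"
  let ?vp = "digits_val ?M p" and ?v = "digits_val (4 * u + 1) x"
  define n where "n = 2^?M - ?vp + ?v"
  have vp: "?vp < 2^?M"
    by (rule digits_val_less)
  have arrive: "?vp + n = 2^?M + ?v"
    unfolding n_def using vp by simp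
  have large: "2^(4 * u - 6) \<le> n"
    using admissible_val_large[OF x u] vp unfolding n_def by linarith
  then obtain n' where n': "n = Suc n'"
    by (cases n) auto
  have "height (odo_add p n') = 1/4"
    using x u arrive unfolding n' by (intro height_before_arrival) auto
  then have "level p (1/4) n \<le> 1/4"
    unfolding n' by simp
  moreover have "(1/2)^2 \<le> level p (1/4) n"
  proof (rule level_lower)
    show "(1/2)^(2 + n) \<le> (1/4::real)"
      using power_decreasing[of 2 "2 + n" "1/2::real"] by (simp add: power2_eq_square)
  qed (rule height_on_approach[OF p x u arrive])
  moreover have "digits_val (4 * u + 1) (odo_add p n) = ?v"
    by (rule digits_val_odo_add_target[OF _ digits_val_less arrive]) simp
  ultimately show ?thesis
    using large by (intro exI[of _ n]) (simp add: power2_eq_square)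
qed

lemma return_to_quarter:
  assumes "admissible p" "admissible x"
  shows "\<exists>n\<ge>N. level p (1/4) n = 1/4 \<and> (\<forall>j<J. odo_add p n j = x j)"
proof -
  define u where "u = N + J + 3"
  obtain n where n: "2^(4 * u - 6) \<le> n"
      "digits_val (4 * u + 1) (odo_add p n) = digits_val (4 * u + 1) x" "level p (1/4) n = 1/4"
    using approach[OF assms, of u] unfolding u_def by auto
  have "N \<le> 4 * u - 6 + 8"
    unfolding u_def by simp
  also have "\<dots> \<le> 2^(4 * u - 6)"
    unfolding u_def by (intro exp_ge_add_8) simp
  finally have "N \<le> n"
    using n(1) by linarith
  moreover have "odo_add p n j = x j" if "j < J" for j
  proof -
    have "j < 4 * u + 1"
      using that unfolding u_def by simp
    then show ?thesis
      using n(2) bit_digits_val[of j "4 * u + 1"] by metis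
  qed
  ultimately show ?thesis
    using n(3) by blast
qed

text \<open>Collapse times: adding collapse_time H to any admissible sequence sets the markers
  1, ..., H (none of which are digits of the sequence), forcing the height, and hence the
  level one step later, below 2^-(H+1).  The time does not depend on the sequence.\<close>
definition collapse_block :: "nat \<Rightarrow> nat \<Rightarrow> bool" where
  "collapse_block H j \<longleftrightarrow> (\<exists>k. 1 \<le> k \<and> k \<le> H \<and> j = marker k)"

definition collapse_time :: "nat \<Rightarrow> nat" where
  "collapse_time H = digits_val (4 * H + 5) (collapse_block H)"

lemma collapse_time_large: "1 \<le> H \<Longrightarrow> 2^(marker H) \<le> collapse_time H"
  unfolding collapse_time_def collapse_block_def
  by (intro digits_val_ge_digit) (auto simp: marker_def)

lemma height_at_collapse_time:
  assumes x: "admissible x"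
  shows "height (odo_add x (collapse_time H)) \<le> (1/2)^(H+1)"
proof (rule height_upper)
  fix j
  assume j: "1 \<le> j" "j \<le> H"
  let ?M = "4 * H + 5"
  have mj: "marker j < ?M"
    using j by (simp add: marker_def)
  have "digits_val ?M x + collapse_time H = digits_val ?M (\<lambda>q. x q \<or> collapse_block H q)"
    unfolding collapse_time_def collapse_block_def using admissible_no_marker[OF x]
    by (intro digits_val_disjoint) blast
  then have "odo_add x (collapse_time H) (marker j) = (x (marker j) \<or> collapse_block H (marker j))"
    using odo_add_bit[OF mj] bit_digits_val[OF mj] by simp
  then show "odo_add x (collapse_time H) (marker j)"
    using j unfolding collapse_block_def by blast
qed

lemma level_after_collapse_time:
  "admissible x \<Longrightarrow> level x s (Suc (collapse_time H)) \<le> (1/2)^(H+1)"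
  using height_at_collapse_time[of x H] by simp

definition code :: "(nat \<Rightarrow> bool) \<Rightarrow> nat \<Rightarrow> bool" where
  "code b j \<longleftrightarrow> (\<exists>s\<ge>1. j = 8 * s + 2) \<or> (\<exists>s. j = 8 * s + 14 \<and> b s)"

lemma admissible_code: "admissible (code b)"
  unfolding admissible_def code_def
proof (intro conjI allI impI)
  fix j
  assume "(\<exists>s\<ge>1. j = 8 * s + 2) \<or> (\<exists>s. j = 8 * s + 14 \<and> b s)"
  then show "\<exists>t\<ge>2. j = 4 * t + 2"
  proof (elim disjE exE conjE)
    fix s
    assume "1 \<le> s" "j = 8 * s + 2"
    then show ?thesis
      by (intro exI[of _ "2 * s"]) simp
  next
    fix s
    assume "j = 8 * s + 14"
    then show ?thesis
      by (intro exI[of _ "2 * s + 3"]) simp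
  qed
qed auto

lemma code_at: "code b (8 * s + 14) = b s"
proof -
  have "8 * s + 14 \<noteq> 8 * s' + 2" for s'
    by presburger
  then show ?thesis
    unfolding code_def by auto
qed

lemma inj_code: "inj code"
proof (rule injI)
  fix b b'
  assume "code b = code b'"
  then have "b s = b' s" for s
    using code_at by metis
  then show "b = b'"
    by blast
qed

lemma uncountable_bool_seq: "uncountable (UNIV :: (nat \<Rightarrow> bool) set)"
proof
  assume "countable (UNIV :: (nat \<Rightarrow> bool) set)"
  then obtain f :: "nat \<Rightarrow> nat \<Rightarrow> bool" where f: "range f = UNIV"
    using uncountable_def by blast
  then obtain k where "(\<lambda>k. \<not> f k k) = f k"
    by (metis rangeE UNIV_I)
  then show False
    by (metis (mono_tags))
qed

lemma uncountable_admissible: "uncountable {x. admissible x}"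
proof
  assume "countable {x. admissible x}"
  moreover have "range code \<subseteq> {x. admissible x}"
    using admissible_code by blast
  ultimately have "countable (range code)"
    by (rule countable_subset[rotated])
  then have "countable (UNIV :: (nat \<Rightarrow> bool) set)"
    using inj_code by (rule countable_image_inj_on)
  then show False
    using uncountable_bool_seq by simp
qed

subsection \<open>The skew product over the odometer\<close>

definition point :: "(nat \<Rightarrow> bool) \<Rightarrow> real \<Rightarrow> nat \<Rightarrow> real" where
  "point d s = (\<lambda>i. case i of 0 \<Rightarrow> s | Suc j \<Rightarrow> (if d j then 1 else 0))"

definition digits_of :: "(nat \<Rightarrow> real) \<Rightarrow> nat \<Rightarrow> bool" where
  "digits_of w = (\<lambda>j. w (Suc j) = 1)"

definition Omega :: "(nat \<Rightarrow> real) set" where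
  "Omega = PiE UNIV (\<lambda>i. case i of 0 \<Rightarrow> Levels | Suc _ \<Rightarrow> {0, 1})"

definition skew :: "(nat \<Rightarrow> real) \<Rightarrow> nat \<Rightarrow> real" where
  "skew w = point (odo_succ (digits_of w)) (min (height (digits_of w)) (2 * w 0))"

lemma point_0 [simp]: "point d s 0 = s"
  by (simp add: point_def)

lemma point_Suc [simp]: "point d s (Suc j) = (if d j then 1 else 0)"
  by (simp add: point_def)

lemma digits_of_point [simp]: "digits_of (point d s) = d"
  by (simp add: digits_of_def point_def)

lemma Omega_iff: "w \<in> Omega \<longleftrightarrow> w 0 \<in> Levels \<and> (\<forall>j. w (Suc j) \<in> {0, 1})"
proof
  assume "w \<in> Omega"
  then show "w 0 \<in> Levels \<and> (\<forall>j. w (Suc j) \<in> {0, 1})"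
    unfolding Omega_def PiE_iff by (metis UNIV_I nat.case)
next
  assume "w 0 \<in> Levels \<and> (\<forall>j. w (Suc j) \<in> {0, 1})"
  then show "w \<in> Omega"
    unfolding Omega_def PiE_iff by (auto split: nat.split)
qed

lemma point_in_Omega: "s \<in> Levels \<Longrightarrow> point d s \<in> Omega"
  by (simp add: Omega_iff)

lemma Omega_point: "w \<in> Omega \<Longrightarrow> w = point (digits_of w) (w 0)"
proof
  fix i
  assume "w \<in> Omega"
  then show "w i = point (digits_of w) (w 0) i"
    by (cases i) (auto simp: Omega_iff digits_of_def)
qed

lemma skew_point: "skew (point d s) = point (odo_succ d) (min (height d) (2 * s))"
  by (simp add: skew_def)

lemma skew_iter: "(skew ^^ n) (point d s) = point (odo_add d n) (level d s n)"
  by (induction n) (simp_all add: skew_point odo_add_Suc)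

lemma skew_Omega: "skew ` Omega \<subseteq> Omega"
  unfolding skew_def using Levels_step by (auto simp: Omega_iff)

text \<open>Levels is a convergent sequence with its limit, so Omega is a product of compact
  sets.\<close>
lemma Levels_compact: "compact Levels"
proof -
  have "(\<lambda>k. (1/2::real)^(Suc k)) \<longlonglongrightarrow> 0"
    using LIMSEQ_power_zero[of "1/2::real"] by (intro LIMSEQ_Suc) simp
  then show ?thesis
    unfolding Levels_def by (rule compact_sequence_with_limit)
qed

lemma Omega_compact: "compact Omega"
proof -
  have "compactin (product_topology (\<lambda>i. euclidean) UNIV)
      (PiE UNIV (\<lambda>i. case i of 0 \<Rightarrow> Levels | Suc _ \<Rightarrow> {0::real, 1}))"
    by (subst compactin_PiE) (auto simp: Levels_compact split: nat.split)
  then show ?thesis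
    unfolding Omega_def euclidean_product_topology by simp
qed

text \<open>On Omega the digit coordinates are locally constant, so a real function that is
  determined up to e by finitely many digits is continuous.\<close>
lemma continuous_on_Omega_digits:
  fixes F :: "(nat \<Rightarrow> real) \<Rightarrow> real"
  assumes "\<And>w e. w \<in> Omega \<Longrightarrow> 0 < e \<Longrightarrow>
      \<exists>N. \<forall>w'\<in>Omega. (\<forall>j<N. digits_of w' j = digits_of w j) \<longrightarrow> \<bar>F w' - F w\<bar> < e"
  shows "continuous_on Omega F"
  unfolding continuous_on_topological
proof (intro ballI allI impI)
  fix w B
  assume w: "w \<in> Omega" and B: "open B" "F w \<in> B"
  obtain e where e: "0 < e" "ball (F w) e \<subseteq> B"
    using B openE by blast
  obtain N where N: "\<forall>w'\<in>Omega. (\<forall>j<N. digits_of w' j = digits_of w j) \<longrightarrow> \<bar>F w' - F w\<bar> < e"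
    using assms[OF w e(1)] by blast
  define A where "A = {v. \<forall>i\<in>{..<N}. v (Suc i) \<in> ball (w (Suc i)) (1/2)}"
  have "open A"
    unfolding A_def by (intro product_topology_basis') auto
  moreover have "w \<in> A"
    unfolding A_def by simp
  moreover have "F y \<in> B" if y: "y \<in> Omega" "y \<in> A" for y
  proof -
    have "digits_of y j = digits_of w j" if j: "j < N" for j
    proof -
      have "y (Suc j) \<in> {0,1}" "w (Suc j) \<in> {0,1}"
        using y(1) w by (auto simp: Omega_iff)
      moreover have "dist (w (Suc j)) (y (Suc j)) < 1/2"
        using y(2) j unfolding A_def by auto
      ultimately show ?thesis
        by (auto simp: dist_real_def digits_of_def)
    qed
    then have "\<bar>F y - F w\<bar> < e"
      using N y(1) by blast
    then show ?thesis
      using e(2) by (auto simp: dist_real_def)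
  qed
  ultimately show "\<exists>A. open A \<and> w \<in> A \<and> (\<forall>y\<in>Omega. y \<in> A \<longrightarrow> F y \<in> B)"
    by blast
qed

lemma continuous_on_height: "continuous_on Omega (\<lambda>w. height (digits_of w))"
proof (rule continuous_on_Omega_digits)
  fix w :: "nat \<Rightarrow> real" and e :: real
  assume "0 < e"
  obtain N where N: "(1/2::real)^N < e"
    using real_arch_pow_inv[OF \<open>0 < e\<close>, of "1/2"] by auto
  have "\<bar>height (digits_of w') - height (digits_of w)\<bar> < e"
    if "\<forall>j<Suc (marker N). digits_of w' j = digits_of w j" for w'
  proof -
    have "\<bar>height (digits_of w') - height (digits_of w)\<bar> \<le> (1/2)^N"
      using that by (intro height_agree) (simp add: marker_def)
    then show ?thesis
      using N by linarith
  qed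
  then show "\<exists>N. \<forall>w'\<in>Omega. (\<forall>j<N. digits_of w' j = digits_of w j) \<longrightarrow>
      \<bar>height (digits_of w') - height (digits_of w)\<bar> < e"
    by blast
qed

lemma continuous_on_odo_digit:
  "continuous_on Omega (\<lambda>w. if odo_succ (digits_of w) j then 1 else (0::real))"
proof (rule continuous_on_Omega_digits)
  fix w :: "nat \<Rightarrow> real" and e :: real
  assume "0 < e"
  show "\<exists>N. \<forall>w'\<in>Omega. (\<forall>i<N. digits_of w' i = digits_of w i) \<longrightarrow>
      \<bar>(if odo_succ (digits_of w') j then 1 else 0) - (if odo_succ (digits_of w) j then 1 else (0::real))\<bar> < e"
  proof (intro exI[of _ "Suc j"] ballI impI)
    fix w'
    assume "\<forall>i<Suc j. digits_of w' i = digits_of w i"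
    then have "odo_succ (digits_of w') j = odo_succ (digits_of w) j"
      unfolding odo_succ_def by simp
    then show "\<bar>(if odo_succ (digits_of w') j then 1 else 0)
        - (if odo_succ (digits_of w) j then 1 else (0::real))\<bar> < e"
      using \<open>0 < e\<close> by simp
  qed
qed

lemma continuous_on_skew: "continuous_on Omega skew"
proof (rule continuous_on_coordinatewise_then_product)
  fix i
  show "continuous_on Omega (\<lambda>w. skew w i)"
  proof (cases i)
    case 0
    have "continuous_on Omega (\<lambda>w. min (height (digits_of w)) (2 * w 0))"
      by (intro continuous_intros continuous_on_height
          continuous_on_subset[OF continuous_on_product_coordinates]) auto
    then show ?thesis
      using 0 by (simp add: skew_def)
  next
    case (Suc j)
    then show ?thesis
      using continuous_on_odo_digit[of j] by (simp add: skew_def)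
  qed
qed

lemma dyn_system_Omega: "dyn_system Omega skew"
  unfolding dyn_system_def using Omega_compact continuous_on_skew skew_Omega by blast

text \<open>Points of Omega with different digit sequences are never proximal: the odometer keeps
  their lowest differing digit apart forever.\<close>
lemma distal_digits:
  assumes "w \<in> Omega" "w' \<in> Omega" "digits_of w \<noteq> digits_of w'"
  shows "\<exists>c>0. \<forall>n. c \<le> dist ((skew ^^ n) w) ((skew ^^ n) w')"
proof -
  obtain j0 where j0: "\<forall>i<j0. digits_of w i = digits_of w' i" "digits_of w j0 \<noteq> digits_of w' j0"
    using first_diff_exists[OF assms(3)] by blast
  have "(1/2)^(to_nat (Suc j0)) \<le> dist ((skew ^^ n) w) ((skew ^^ n) w')" for n
  proof -
    let ?d = "odo_add (digits_of w) n" and ?d' = "odo_add (digits_of w') n"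
    have "(skew ^^ n) w = point ?d (level (digits_of w) (w 0) n)"
      "(skew ^^ n) w' = point ?d' (level (digits_of w') (w' 0) n)"
      using Omega_point[OF assms(1)] Omega_point[OF assms(2)] skew_iter by metis+
    moreover have "?d j0 \<noteq> ?d' j0"
      using odo_add_first_diff[OF j0] .
    then have "dist (point ?d s (Suc j0)) (point ?d' s' (Suc j0)) = 1" for s s'
      by (auto simp: dist_real_def)
    ultimately show ?thesis
      using dist_fun_ge_coordinate[of "Suc j0" "(skew ^^ n) w" "(skew ^^ n) w'"] by simp
  qed
  then show ?thesis
    by (intro exI[of _ "(1/2)^(to_nat (Suc j0))"]) auto
qed

lemma scrambled_same_digits:
  assumes S: "scrambled X skew S" and X: "X \<subseteq> Omega" and w: "w \<in> S" "w' \<in> S"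
  shows "digits_of w = digits_of w'"
proof (rule ccontr)
  assume ne: "digits_of w \<noteq> digits_of w'"
  have "w \<in> Omega" "w' \<in> Omega"
    using S X w unfolding scrambled_def by auto
  then obtain c where c: "0 < c" "\<forall>n. c \<le> dist ((skew ^^ n) w) ((skew ^^ n) w')"
    using distal_digits ne by blast
  then have "ereal c \<le> liminf (\<lambda>n. ereal (dist ((skew ^^ n) w) ((skew ^^ n) w')))"
    by (intro Liminf_bounded) simp
  moreover have "w \<noteq> w'"
    using ne by blast
  then have "liminf (\<lambda>n. ereal (dist ((skew ^^ n) w) ((skew ^^ n) w'))) = 0"
    using S w unfolding scrambled_def by blast
  ultimately show False
    using c(1) by simp
qed

text \<open>So a scrambled set inside Omega lies in one fibre over the countable set Levels.\<close>
lemma scrambled_in_Omega_countable: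
  assumes S: "scrambled X skew S" and X: "X \<subseteq> Omega"
  shows "countable S"
proof -
  obtain w1 where w1: "w1 \<in> S"
    using S unfolding scrambled_def by blast
  have "S \<subseteq> point (digits_of w1) ` Levels"
  proof
    fix w
    assume w: "w \<in> S"
    then have wO: "w \<in> Omega"
      using S X unfolding scrambled_def by blast
    then have "w = point (digits_of w1) (w 0)"
      using Omega_point[OF wO] scrambled_same_digits[OF S X w w1] by simp
    moreover have "w 0 \<in> Levels"
      using wO by (simp add: Omega_iff)
    ultimately show "w \<in> point (digits_of w1) ` Levels"
      by blast
  qed
  moreover have "countable Levels"
    unfolding Levels_def by simp
  then have "countable (point (digits_of w1) ` Levels)"
    by simp
  ultimately show ?thesis
    by (rule countable_subset)
qed

subsection \<open>The extension Y\<close>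

definition base_seq :: "nat \<Rightarrow> bool" where
  "base_seq = code (\<lambda>_. False)"

definition Ysys :: "(nat \<Rightarrow> real) set" where
  "Ysys = orbit_closure skew (point base_seq (1/4))"

lemma admissible_base_seq: "admissible base_seq"
  unfolding base_seq_def by (rule admissible_code)

lemma quarter_in_Levels: "(1/4::real) \<in> Levels"
proof -
  have "(1/4::real) = (1/2)^(Suc 1)"
    by (simp add: power2_eq_square)
  then show ?thesis
    unfolding Levels_def by blast
qed

lemma base_point_in_Omega: "point base_seq (1/4) \<in> Omega"
  by (rule point_in_Omega[OF quarter_in_Levels])

lemma dyn_system_Y: "dyn_system Ysys skew"
  unfolding Ysys_def using dyn_system_Omega base_point_in_Omega by (rule orbit_closure_dyn_system)

lemma Y_subset_Omega: "Ysys \<subseteq> Omega"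
  unfolding Ysys_def using dyn_system_Omega base_point_in_Omega by (rule orbit_closure_subset)

lemma point_close:
  assumes "0 < e"
  shows "\<exists>J. \<forall>d d' s. (\<forall>j<J. d j = d' j) \<longrightarrow> dist (point d s) (point d' s) < e"
proof -
  obtain J where J: "\<forall>w w' :: nat \<Rightarrow> real. (\<forall>i<J. w i = w' i) \<longrightarrow> dist w w' < e"
    using dist_fun_small_if_agree[OF assms] by blast
  have "dist (point d s) (point d' s) < e" if "\<forall>j<J. d j = d' j" for d d' s
  proof -
    have "point d s i = point d' s i" if "i < J" for i
      using \<open>\<forall>j<J. d j = d' j\<close> that by (cases i) auto
    then show ?thesis
      using J by blast
  qed
  then show ?thesis
    by blast
qed

lemma returns_near:
  assumes "admissible p" "admissible x" "0 < e"
  shows "\<exists>n\<ge>N. level p (1/4) n = 1/4 \<and> dist ((skew ^^ n) (point p (1/4))) (point x (1/4)) < e"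
proof -
  obtain J where J: "\<forall>d d' s. (\<forall>j<J. d j = d' j) \<longrightarrow> dist (point d s) (point d' s) < e"
    using point_close[OF assms(3)] by blast
  obtain n where n: "N \<le> n" "level p (1/4) n = 1/4" "\<forall>j<J. odo_add p n j = x j"
    using return_to_quarter[OF assms(1,2)] by blast
  then have "dist (point (odo_add p n) (1/4)) (point x (1/4)) < e"
    using J by blast
  then have "dist ((skew ^^ n) (point p (1/4))) (point x (1/4)) < e"
    using n(2) by (simp only: skew_iter)
  then show ?thesis
    using n by blast
qed

lemma admissible_in_Y:
  assumes "admissible x"
  shows "point x (1/4) \<in> Ysys"
  unfolding Ysys_def orbit_closure_def
proof (rule closure_approachable[THEN iffD2], intro allI impI)
  fix e :: real
  assume "0 < e"
  then obtain n where "dist ((skew ^^ n) (point base_seq (1/4))) (point x (1/4)) < e"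
    using returns_near[OF admissible_base_seq assms] by blast
  then show "\<exists>y\<in>range (\<lambda>n. (skew ^^ n) (point base_seq (1/4))). dist y (point x (1/4)) < e"
    by blast
qed

text \<open>The base point is recurrent, so Y is transitive.\<close>
lemma transitive_Y: "transitive_sys Ysys skew"
  unfolding Ysys_def using dyn_system_Omega base_point_in_Omega
proof (rule orbit_closure_transitive)
  fix e :: real and N :: nat
  assume "0 < e"
  then show "\<exists>n\<ge>N. dist ((skew ^^ n) (point base_seq (1/4))) (point base_seq (1/4)) < e"
    using returns_near[OF admissible_base_seq admissible_base_seq] by blast
qed

text \<open>Y lies in Omega, so it has no uncountable scrambled set.\<close>
lemma not_li_yorke_Y: "\<not> li_yorke_chaotic Ysys skew"
  unfolding li_yorke_chaotic_def using scrambled_in_Omega_countable[OF _ Y_subset_Omega] by blast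

subsection \<open>The factor X and its Li-Yorke chaos\<close>

text \<open>The collapse multiplies the digit coordinates by the level, so all points of level 0
  are identified; expand inverts it away from level 0.\<close>
definition collapse :: "(nat \<Rightarrow> real) \<Rightarrow> nat \<Rightarrow> real" where
  "collapse w = (\<lambda>i. case i of 0 \<Rightarrow> w 0 | Suc _ \<Rightarrow> w 0 * w i)"

definition expand :: "(nat \<Rightarrow> real) \<Rightarrow> nat \<Rightarrow> real" where
  "expand v = (\<lambda>i. case i of 0 \<Rightarrow> v 0 | Suc _ \<Rightarrow> (if v 0 = 0 then 0 else v i / v 0))"

definition collapsed_skew :: "(nat \<Rightarrow> real) \<Rightarrow> nat \<Rightarrow> real" where
  "collapsed_skew v = collapse (skew (expand v))"

definition Xsys :: "(nat \<Rightarrow> real) set" where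
  "Xsys = collapse ` Ysys"

lemma collapse_0 [simp]: "collapse w 0 = w 0"
  by (simp add: collapse_def)

lemma collapse_Suc [simp]: "collapse w (Suc j) = w 0 * w (Suc j)"
  by (simp add: collapse_def)

lemma continuous_on_collapse: "continuous_on S collapse"
proof (rule continuous_on_coordinatewise_then_product)
  fix i
  have "continuous_on S (\<lambda>w. w 0 * w i :: real)"
    by (intro continuous_intros continuous_on_subset[OF continuous_on_product_coordinates]) simp_all
  moreover have "continuous_on S (\<lambda>w. w 0 :: real)"
    by (rule continuous_on_subset[OF continuous_on_product_coordinates]) simp
  ultimately show "continuous_on S (\<lambda>w. collapse w i)"
    by (cases i) simp_all
qed

text \<open>collapsed_skew is semiconjugate to skew via collapse, since points of level 0 stay at
  level 0.\<close>
lemma collapsed_skew_collapse: "collapsed_skew (collapse w) = collapse (skew w)"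
proof (cases "w 0 = 0")
  case True
  have zero: "collapse (skew v) = (\<lambda>_. 0)" if "v 0 = 0" for v
  proof
    have "skew v 0 = 0"
      using that height_nonneg[of "digits_of v"] by (simp add: skew_def)
    then show "collapse (skew v) i = 0" for i
      by (cases i) simp_all
  qed
  have "expand (collapse w) 0 = 0"
    using True by (simp add: expand_def)
  then show ?thesis
    unfolding collapsed_skew_def using zero True by simp
next
  case False
  have "expand (collapse w) = w"
  proof
    fix i
    show "expand (collapse w) i = w i"
      using False by (cases i) (simp_all add: expand_def)
  qed
  then show ?thesis
    by (simp add: collapsed_skew_def)
qed

lemma collapsed_skew_iter: "(collapsed_skew ^^ n) (collapse w) = collapse ((skew ^^ n) w)"
  by (induction n) (simp_all add: collapsed_skew_collapse)

lemma factor_X: "factor_map Ysys skew Xsys collapsed_skew collapse"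
  unfolding factor_map_def Xsys_def using continuous_on_collapse collapsed_skew_collapse by simp

lemma dyn_system_X: "dyn_system Xsys collapsed_skew"
  unfolding Xsys_def
  by (rule image_dyn_system[OF dyn_system_Y continuous_on_collapse]) (rule collapsed_skew_collapse[symmetric])

lemma transitive_X: "transitive_sys Xsys collapsed_skew"
  using dyn_system_Y factor_X transitive_Y by (rule transitive_factor)

definition adm_point :: "(nat \<Rightarrow> bool) \<Rightarrow> nat \<Rightarrow> real" where
  "adm_point x = collapse (point x (1/4))"

lemma adm_point_iter: "(collapsed_skew ^^ n) (adm_point x) = collapse (point (odo_add x n) (level x (1/4) n))"
  unfolding adm_point_def collapsed_skew_iter skew_iter ..

lemma level_nonneg: "0 \<le> level x (1/4) n"
  by (rule Levels_nonneg[OF level_in_Levels[OF quarter_in_Levels]])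

lemma inj_adm_point: "inj adm_point"
proof (rule injI)
  fix x x'
  assume eq: "adm_point x = adm_point x'"
  show "x = x'"
  proof
    fix j
    have "adm_point x (Suc j) = adm_point x' (Suc j)"
      using eq by simp
    then show "x j = x' j"
      unfolding adm_point_def by (cases "x j"; cases "x' j") simp_all
  qed
qed

text \<open>Collapsed points of small levels are close: every coordinate is at most the level.\<close>
lemma collapse_point_dist:
  assumes "0 \<le> s" "s \<le> (1/2)^N" "0 \<le> s'" "s' \<le> (1/2)^N"
  shows "dist (collapse (point d s)) (collapse (point d' s')) \<le> 3 * (1/2)^N"
proof -
  have "dist (collapse (point d s) i) (collapse (point d' s') i) \<le> (1/2)^N" for i
    using assms by (cases i) (auto simp: dist_real_def)
  then have "dist (collapse (point d s)) (collapse (point d' s')) \<le> 2 * (1/2)^N + (1/2)^N"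
    by (rule dist_fun_le_uniform)
  then show ?thesis
    by simp
qed

text \<open>At the collapse times all embedded admissible points come close together, because
  their levels are simultaneously small.\<close>
lemma adm_point_proximal:
  assumes x: "admissible x" and x': "admissible x'"
  shows "liminf (\<lambda>n. ereal (dist ((collapsed_skew ^^ n) (adm_point x)) ((collapsed_skew ^^ n) (adm_point x')))) = 0"
proof (rule liminf_eq_0_if_frequently_small)
  fix e :: real and N :: nat
  assume e: "0 < e"
  obtain K where K: "(1/2::real)^K < e/3"
    using real_arch_pow_inv[of "e/3" "1/2"] e by auto
  define H where "H = K + N + 1"
  define n where "n = Suc (collapse_time H)"
  have "N \<le> marker H"
    unfolding H_def marker_def by simp
  also have "\<dots> < 2^(marker H)"
    by (rule less_exp)
  also have "\<dots> \<le> collapse_time H"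
    unfolding H_def by (intro collapse_time_large) simp
  finally have "N \<le> n"
    unfolding n_def by simp
  have "dist ((collapsed_skew ^^ n) (adm_point x)) ((collapsed_skew ^^ n) (adm_point x')) \<le> 3 * (1/2)^(H+1)"
    unfolding adm_point_iter n_def
    by (rule collapse_point_dist[OF level_nonneg level_after_collapse_time[OF x]
          level_nonneg level_after_collapse_time[OF x']])
  also have "(1/2::real)^(H+1) \<le> (1/2)^K"
    unfolding H_def by (intro power_decreasing) auto
  then have "3 * (1/2::real)^(H+1) < e"
    using K by linarith
  finally show "\<exists>n\<ge>N. dist ((collapsed_skew ^^ n) (adm_point x)) ((collapsed_skew ^^ n) (adm_point x')) < e"
    using \<open>N \<le> n\<close> by blast
qed simp

text \<open>Whenever the level of x is back at 1/4, the embedded points of x and x' are apart: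
  either the levels differ, or the digits at the lowest difference of x and x' contribute
  1/4.\<close>
lemma adm_point_apart:
  assumes j0: "\<forall>i<j0. x i = x' i" "x j0 \<noteq> x' j0" and n: "level x (1/4) n = 1/4"
  shows "min ((1/2)^(to_nat (0::nat)) * (1/8)) ((1/2)^(to_nat (Suc j0)) * (1/4::real))
    \<le> dist ((collapsed_skew ^^ n) (adm_point x)) ((collapsed_skew ^^ n) (adm_point x'))"
proof -
  let ?s' = "level x' (1/4) n"
  let ?w = "collapse (point (odo_add x n) (1/4))" and ?w' = "collapse (point (odo_add x' n) ?s')"
  have eq: "dist ((collapsed_skew ^^ n) (adm_point x)) ((collapsed_skew ^^ n) (adm_point x')) = dist ?w ?w'"
    unfolding adm_point_iter n ..
  show ?thesis
  proof (cases "?s' = 1/4")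
    case False
    have "1/8 \<le> min (dist (?w 0) (?w' 0)) 1"
      using Levels_gap[OF level_in_Levels[OF quarter_in_Levels] False] by (simp add: dist_real_def)
    then have "(1/2)^(to_nat (0::nat)) * (1/8) \<le> (1/2)^(to_nat (0::nat)) * min (dist (?w 0) (?w' 0)) 1"
      by (intro mult_left_mono) simp_all
    also have "\<dots> \<le> dist ?w ?w'"
      by (rule dist_fun_ge_coordinate)
    finally show ?thesis
      unfolding eq by linarith
  next
    case True
    have "odo_add x n j0 \<noteq> odo_add x' n j0"
      using odo_add_first_diff[OF j0] .
    then have "min (dist (?w (Suc j0)) (?w' (Suc j0))) 1 = 1/4"
      using True by (auto simp: dist_real_def)
    moreover have "(1/2)^(to_nat (Suc j0)) * min (dist (?w (Suc j0)) (?w' (Suc j0))) 1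
        \<le> dist ?w ?w'"
      by (rule dist_fun_ge_coordinate)
    ultimately have "(1/2)^(to_nat (Suc j0)) * (1/4) \<le> dist ?w ?w'"
      by metis
    then show ?thesis
      unfolding eq by linarith
  qed
qed

text \<open>Since the level of x returns to 1/4 infinitely often, distinct embedded admissible
  points do not converge together.\<close>
lemma adm_point_separated:
  assumes x: "admissible x" and ne: "x \<noteq> x'"
  shows "0 < limsup (\<lambda>n. ereal (dist ((collapsed_skew ^^ n) (adm_point x)) ((collapsed_skew ^^ n) (adm_point x'))))"
proof -
  obtain j0 where j0: "\<forall>i<j0. x i = x' i" "x j0 \<noteq> x' j0"
    using first_diff_exists[OF ne] by blast
  let ?c = "min ((1/2)^(to_nat (0::nat)) * (1/8)) ((1/2)^(to_nat (Suc j0)) * (1/4::real))"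
  show ?thesis
  proof (rule limsup_pos_if_frequently_large)
    show "0 < ?c"
      by simp
    fix N
    obtain n where "N \<le> n" "level x (1/4) n = 1/4"
      using return_to_quarter[OF x x, of N 0] by blast
    then show "\<exists>n\<ge>N. ?c \<le> dist ((collapsed_skew ^^ n) (adm_point x)) ((collapsed_skew ^^ n) (adm_point x'))"
      using adm_point_apart[OF j0] by blast
  qed
qed

lemma li_yorke_X: "li_yorke_chaotic Xsys collapsed_skew"
proof -
  define S where "S = adm_point ` {x. admissible x}"
  have "S \<subseteq> Xsys"
    unfolding S_def Xsys_def adm_point_def using admissible_in_Y by blast
  moreover have "adm_point (code (\<lambda>_. False)) \<in> S" "adm_point (code (\<lambda>_. True)) \<in> S"
    unfolding S_def using admissible_code by blast+
  moreover have "adm_point (code (\<lambda>_. False)) \<noteq> adm_point (code (\<lambda>_. True))"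
    using inj_adm_point code_at[of "\<lambda>_. False" 0] code_at[of "\<lambda>_. True" 0]
    by (metis injD)
  moreover have "liminf (\<lambda>n. ereal (dist ((collapsed_skew ^^ n) a) ((collapsed_skew ^^ n) b))) = 0 \<and>
      limsup (\<lambda>n. ereal (dist ((collapsed_skew ^^ n) a) ((collapsed_skew ^^ n) b))) > 0"
    if ab: "a \<in> S" "b \<in> S" "a \<noteq> b" for a b
  proof -
    obtain x x' where "admissible x" "admissible x'" "a = adm_point x" "b = adm_point x'"
      using ab(1,2) unfolding S_def by blast
    moreover have "x \<noteq> x'"
      using ab(3) calculation by blast
    ultimately show ?thesis
      using adm_point_proximal adm_point_separated by blast
  qed
  ultimately have "scrambled Xsys collapsed_skew S"
    unfolding scrambled_def by blast
  moreover have "uncountable S"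
    unfolding S_def
    using uncountable_admissible countable_image_inj_on[OF _ inj_on_subset[OF inj_adm_point]] by blast
  ultimately show ?thesis
    unfolding li_yorke_chaotic_def by blast
qed

theorem mainTheorem1:
  shows "\<exists>(Y::(nat \<Rightarrow> real) set) g (X::(nat \<Rightarrow> real) set) f \<phi>.
           dyn_system Y g \<and> dyn_system X f \<and> factor_map Y g X f \<phi> \<and>
           transitive_sys Y g \<and> transitive_sys X f \<and>
           li_yorke_chaotic X f \<and> \<not> li_yorke_chaotic Y g"
  using dyn_system_Y dyn_system_X factor_X transitive_Y transitive_X li_yorke_X not_li_yorke_Y
  by blast

end
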